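(* Let $n$ be an odd composite integer. Then $|S(n)| = 2$ if and only if (1) $n$ is divisible by some prime $p \equiv 3 \pmod 4$, and (2) $\gcd(p', (n/p)') = 1$ for every prime $p$ dividing $n$.
   Context: For a positive integer $m$, $m'$ denotes the odd part of $m-1$ (so $m-1 = 2^k m'$ with $m'$ odd). The set of strong liars of $n$ (with $n - 1 = 2^k n'$, $n'$ odd) is $S(n) = \{ a \bmod n : a^{n'} \equiv 1 \pmod n \text{ or } a^{2^i n'} \equiv -1 \pmod n \text{ for some } 0 \le i < k\}$. *)

theory Defs
  imports "HOL-Number_Theory.Number_Theory"
begin

definition two_exp :: "nat \<Rightarrow> nat" where
  "two_exp m = multiplicity (2::nat) (m - 1)"

text \<open>m' = the odd part of m - 1.\<close>
definition odd_part_pred :: "nat \<Rightarrow> nat" where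
  "odd_part_pred m = (m - 1) div 2 ^ two_exp m"

definition strong_liars :: "nat \<Rightarrow> nat set" where
  "strong_liars n = {a \<in> {0..<n}.
     [a ^ odd_part_pred n = 1] (mod n) \<or>
     (\<exists>i < two_exp n. [a ^ (2 ^ i * odd_part_pred n) = n - 1] (mod n))}"

end

theory Submission
  imports Defs "HOL-Number_Theory.Residue_Primitive_Roots"
begin

text \<open>Write n - 1 = 2^k d with d odd. A strong liar a satisfies a^d = 1 or a^(2^i d) = -1 for
  some i < k. All d-th roots of unity modulo n are trivial iff d is coprime to the Carmichael
  function lambda(n), i.e. iff gcd(p - 1, d) = 1 for every prime p dividing n; since
  gcd(p', (n/p)') = gcd(p - 1, d), this is condition (2). As d is odd, a^d = -1 makes -a a
  d-th root of unity, so the case i = 0 only contributes -1 once the roots are trivial. For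
  i \<ge> 1, a^(2^(i-1) d) is a square root of -1; conversely a square root of -1 is itself a
  strong liar with i = 1 (it forces n = 1 mod 4, hence k \<ge> 2). Finally, -1 is a square modulo
  the odd number n iff every prime factor of n is 1 mod 4, i.e. iff condition (1) fails.\<close>

section \<open>Odd parts of predecessors\<close>

lemma odd_part_pred_decomp:
  assumes "m \<ge> 2"
  shows "m - 1 = 2 ^ two_exp m * odd_part_pred m" and "odd (odd_part_pred m)"
  unfolding two_exp_def odd_part_pred_def
  using multiplicity_dvd[of "2::nat" "m - 1"] multiplicity_decompose[of "m - 1" "2::nat"] assms
  by simp_all

lemma two_exp_geI:
  assumes "2 ^ j dvd m - 1" and "m \<ge> 2"
  shows "j \<le> two_exp m"
  unfolding two_exp_def using assms by (intro multiplicity_geI) auto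

lemma coprime_odd_part_pred:
  assumes "m \<ge> 2"
  shows "coprime m (odd_part_pred m)"
proof -
  have "odd_part_pred m dvd m - 1"
    using odd_part_pred_decomp(1)[OF assms] by simp
  then show ?thesis
    using coprime_diff_one_right_nat[of m] assms by (auto intro: coprime_divisors[OF dvd_refl, rotated])
qed

lemma gcd_odd_part_pred_mult:
  assumes "p \<ge> 2" and "m \<ge> 2"
  shows "gcd (odd_part_pred p) (odd_part_pred m) = gcd (p - 1) (odd_part_pred (p * m))"
proof -
  let ?p' = "odd_part_pred p" and ?n' = "odd_part_pred (p * m)"
  have "p * m \<ge> 2 * 1"
    using assms by (intro mult_le_mono) auto
  note p = odd_part_pred_decomp[OF assms(1)] and m = odd_part_pred_decomp[OF assms(2)]
    and n = odd_part_pred_decomp[OF \<open>p * m \<ge> 2 * 1\<close>[simplified]]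
  have gcd_cancel: "gcd x (2 ^ j * y) = gcd x y" if "odd x" for x y j :: nat
    using that by (intro gcd_mult_right_left_cancel) auto
  have "p * m - 1 = (p - 1) * m + (m - 1)"
    using assms by (simp add: diff_mult_distrib)
  also have "\<dots> = (2 ^ two_exp p * m) * ?p' + (m - 1)"
    using p(1) by simp
  finally have n_minus_1: "p * m - 1 = (2 ^ two_exp p * m) * ?p' + (m - 1)" .
  have "gcd ?p' (odd_part_pred m) = gcd ?p' (m - 1)"
    using m(1) gcd_cancel[OF p(2)] by simp
  also have "\<dots> = gcd ?p' (p * m - 1)"
    unfolding n_minus_1 by (rule gcd_add_mult[symmetric])
  also have "\<dots> = gcd ?p' ?n'"
    using n(1) gcd_cancel[OF p(2)] by simp
  also have "\<dots> = gcd (p - 1) ?n'"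
    using p(1) gcd_cancel[OF n(2)] by (simp add: gcd.commute)
  finally show ?thesis .
qed

lemma gcd_odd_part_pred_div:
  assumes "p \<ge> 2" and "p dvd n" and "p < n"
  shows "gcd (odd_part_pred p) (odd_part_pred (n div p)) = gcd (p - 1) (odd_part_pred n)"
proof -
  obtain m where n: "n = p * m"
    using assms(2) ..
  then have "m \<noteq> 0" and "m \<noteq> 1"
    using assms(3) by auto
  then show ?thesis
    using gcd_odd_part_pred_mult[OF assms(1), of m] assms(1) n by simp
qed

section \<open>Roots of unity and the Carmichael function\<close>

lemma prime_power_factorE:
  fixes n p :: nat
  assumes "n \<noteq> 0" and "prime p" and "p dvd n"
  obtains e m where "n = p ^ e * m" and "e > 0" and "\<not> p dvd m"
proof
  show "n = p ^ multiplicity p n * (n div p ^ multiplicity p n)"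
    using multiplicity_dvd[of p n] by simp
  show "multiplicity p n > 0"
    using assms by (simp add: prime_multiplicity_gt_zero_iff)
  show "\<not> p dvd n div p ^ multiplicity p n"
    using assms by (intro multiplicity_decompose) auto
qed

lemma pred_dvd_Carmichael:
  fixes n p :: nat
  assumes "n \<noteq> 0" and "prime p" and "p dvd n"
  shows "p - 1 dvd Carmichael n"
proof (cases "p = 2")
  case False
  then have "odd p"
    using assms(2) primes_dvd_imp_eq two_is_prime_nat by blast
  obtain e m where n: "n = p ^ e * m" and "e > 0" and "\<not> p dvd m"
    using assms by (rule prime_power_factorE)
  have "p ^ e > 1"
    using \<open>e > 0\<close> prime_gt_1_nat[OF assms(2)] by (intro one_less_power)
  have "Carmichael (p ^ e) dvd Carmichael n"
  proof (cases "m = 1")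
    case False
    then have "m > 1"
      using n assms(1) by (cases m) auto
    moreover have "coprime (p ^ e) m"
      using \<open>\<not> p dvd m\<close> assms(2) by (simp add: prime_imp_coprime)
    ultimately show ?thesis
      using Carmichael_dvd_mono_coprime \<open>p ^ e > 1\<close> n by simp
  qed (simp add: n)
  moreover have "p - 1 dvd Carmichael (p ^ e)"
    using Carmichael_odd_prime_power[OF assms(2) \<open>odd p\<close> \<open>e > 0\<close>] by simp
  ultimately show ?thesis
    using dvd_trans by blast
qed simp

lemma coprime_totient_if_coprime_pred_prime_factors:
  fixes n d :: nat
  assumes "n > 0" and "coprime n d" and "\<And>p. prime p \<Longrightarrow> p dvd n \<Longrightarrow> coprime (p - 1) d"
  shows "coprime d (totient n)"
proof (rule ccontr)
  assume "\<not> coprime d (totient n)"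
  then have "gcd d (totient n) \<noteq> 1"
    by (simp only: coprime_iff_gcd_eq_1 not_False_eq_True)
  then obtain r where r: "prime r" "r dvd gcd d (totient n)"
    using prime_factor_nat by blast
  then have "r dvd (\<Prod>p\<in>prime_factors n. p ^ (multiplicity p n - 1) * (p - 1))"
    using totient_formula1[OF assms(1)] by simp
  then have "\<exists>p\<in>prime_factors n. r dvd p ^ (multiplicity p n - 1) * (p - 1)"
    by (subst (asm) prime_dvd_prod_iff[OF _ r(1)]) auto
  then obtain p where "p \<in> prime_factors n" and "r dvd p ^ (multiplicity p n - 1) * (p - 1)"
    by blast
  moreover from this(1) have p: "prime p" "p dvd n"
    by (auto simp: in_prime_factors_iff)
  ultimately consider "r dvd p ^ (multiplicity p n - 1)" | "r dvd p - 1"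
    using prime_dvd_multD[OF r(1)] by blast
  then show False
  proof cases
    case 1
    then have "r dvd p"
      using prime_dvd_power r(1) by blast
    then have "r = p"
      using p r(1) primes_dvd_imp_eq by blast
    then have "p dvd d"
      using r(2) by simp
    then show False
      using coprime_common_divisor_nat[OF assms(2) p(2)] p(1) by auto
  next
    case 2
    then have "r dvd gcd (p - 1) d"
      using r by simp
    then show False
      using assms(3)[OF p] r(1) by (simp only: coprime_iff_gcd_eq_1) auto
  qed
qed

lemma coprime_Carmichael_iff:
  fixes n d :: nat
  assumes "n > 0" and "coprime n d"
  shows "coprime d (Carmichael n) \<longleftrightarrow> (\<forall>p. prime p \<and> p dvd n \<longrightarrow> coprime (p - 1) d)"
proof
  assume "coprime d (Carmichael n)"
  then show "\<forall>p. prime p \<and> p dvd n \<longrightarrow> coprime (p - 1) d"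
  proof (intro allI impI, elim conjE)
    fix p :: nat
    assume "prime p" and "p dvd n"
    then have "p - 1 dvd Carmichael n"
      using assms(1) by (intro pred_dvd_Carmichael) auto
    then show "coprime (p - 1) d"
      using \<open>coprime d (Carmichael n)\<close> coprime_divisors[OF dvd_refl] coprime_commute by blast
  qed
next
  assume "\<forall>p. prime p \<and> p dvd n \<longrightarrow> coprime (p - 1) d"
  then have "coprime d (totient n)"
    using assms by (intro coprime_totient_if_coprime_pred_prime_factors) auto
  then show "coprime d (Carmichael n)"
    using Carmichael_dvd_totient coprime_divisors dvd_refl by blast
qed

lemma roots_of_unity_trivial_iff_coprime_Carmichael:
  fixes n d :: nat
  assumes "n > 1" and "d > 0"
  shows "(\<forall>x. [x ^ d = 1] (mod n) \<longrightarrow> [x = 1] (mod n)) \<longleftrightarrow> coprime d (Carmichael n)"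
proof
  assume trivial: "\<forall>x. [x ^ d = 1] (mod n) \<longrightarrow> [x = 1] (mod n)"
  show "coprime d (Carmichael n)"
  proof (rule ccontr)
    define L r where "L = Carmichael n" and "r = gcd d L"
    assume "\<not> coprime d (Carmichael n)"
    then have "r > 1"
      using assms(2) unfolding r_def L_def coprime_iff_gcd_eq_1 by (simp add: nat_neq_iff)
    obtain x where ord_x: "ord n x = L"
      using Carmichael_root_exists[of n] assms(1) unfolding L_def by blast
    have "r dvd L" and "r dvd d"
      unfolding r_def by simp_all
    have "L div r < L"
      using \<open>r > 1\<close> by (simp add: L_def)
    moreover have "L div r > 0"
      using \<open>r dvd L\<close> \<open>r > 1\<close> by (simp add: L_def div_greater_zero_iff dvd_imp_le)
    ultimately have "\<not> L dvd L div r"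
      by (auto dest: dvd_imp_le)
    then have "\<not> [x ^ (L div r) = 1] (mod n)"
      using ord_x ord_divides by metis
    moreover have "L dvd L div r * d"
      using \<open>r dvd L\<close> \<open>r dvd d\<close> by (auto elim!: dvdE simp: \<open>r > 1\<close>)
    then have "[x ^ (L div r * d) = 1] (mod n)"
      using ord_x ord_divides by metis
    then have "[(x ^ (L div r)) ^ d = 1] (mod n)"
      by (simp add: power_mult)
    ultimately show False
      using trivial by blast
  qed
next
  assume "coprime d (Carmichael n)"
  show "\<forall>x. [x ^ d = 1] (mod n) \<longrightarrow> [x = 1] (mod n)"
  proof (intro allI impI)
    fix x
    assume "[x ^ d = 1] (mod n)"
    then have "ord n x dvd d"
      by (simp add: ord_divides')
    moreover have "coprime n x"
      using \<open>ord n x dvd d\<close> assms(2) by (auto intro: ccontr)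
    then have "ord n x dvd Carmichael n"
      using assms(1) by (intro ord_dvd_Carmichael)
    ultimately have "ord n x = 1"
      using \<open>coprime d (Carmichael n)\<close> coprime_common_divisor_nat by blast
    then show "[x = 1] (mod n)"
      using ord_eq_Suc_0_iff by simp
  qed
qed

section \<open>Square roots of -1\<close>

lemma not_cong_1_minus_1: "n > 2 \<Longrightarrow> \<not> [1 = - 1 :: int] (mod int n)"
  by (auto simp: cong_iff_dvd_diff dest!: zdvd_imp_le)

lemma cong_square_1_prime_power:
  fixes x :: int and p e :: nat
  assumes "prime p" and "odd p" and "[x ^ 2 = 1] (mod int p ^ e)"
  shows "[x = 1] (mod int p ^ e) \<or> [x = - 1] (mod int p ^ e)"
proof -
  have "int p ^ e dvd (x - 1) * (x + 1)"
    using assms(3) by (simp add: cong_iff_dvd_diff power2_eq_square algebra_simps)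
  moreover have "\<not> int p dvd x - 1 \<or> \<not> int p dvd x + 1"
  proof (rule ccontr)
    assume "\<not> ?thesis"
    then have "int p dvd (x + 1) - (x - 1)"
      using dvd_diff by blast
    then have "int p dvd 2"
      by simp
    then have "p dvd 2"
      by presburger
    then show False
      using assms(2) primes_dvd_imp_eq[OF assms(1) two_is_prime_nat] by auto
  qed
  then have "coprime (int p ^ e) (x - 1) \<or> coprime (int p ^ e) (x + 1)"
    using prime_imp_power_coprime[of "int p" "x - 1" e] prime_imp_power_coprime[of "int p" "x + 1" e]
      assms(1) by (auto simp: coprime_commute)
  ultimately have "int p ^ e dvd x - 1 \<or> int p ^ e dvd x + 1"
    by (auto simp: coprime_dvd_mult_left_iff coprime_dvd_mult_right_iff)
  then show ?thesis
    by (simp add: cong_iff_dvd_diff)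
qed

lemma exists_sqrt_minus_1_mod_prime_power:
  assumes "prime p" and "[p = 1] (mod 4)"
  shows "\<exists>x. [x ^ 2 = - 1 :: int] (mod int p ^ e)"
proof (cases "e = 0")
  case False
  have "odd p"
    using assms(2) unfolding cong_def by presburger
  then obtain g where "residue_primroot (p ^ e) g"
    using residue_primroot_odd_prime_power_exists[OF assms(1)] False by blast
  then have ord_g: "ord (p ^ e) g = totient (p ^ e)"
    by (simp add: residue_primroot_def)
  have "4 dvd p - 1"
    using assms(2) by (rule cong_to_1_nat)
  then have "4 dvd totient (p ^ e)"
    using totient_prime_power[OF assms(1)] False by simp
  then obtain t where t: "totient (p ^ e) = 4 * t" ..
  moreover have "totient (p ^ e) > 0"
    using prime_gt_0_nat[OF assms(1)] by simp
  ultimately have "t > 0"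
    by simp
  \<comment> \<open>a square root of 1 other than 1, hence -1\<close>
  define s where "s = g ^ (2 * t)"
  have "[s ^ 2 = 1] (mod p ^ e)"
    using ord_g t ord_divides[of g "4 * t"] by (simp add: s_def power_mult[symmetric])
  moreover have "\<not> [s = 1] (mod p ^ e)"
    using ord_g t ord_divides[of g "2 * t"] \<open>t > 0\<close> by (auto simp: s_def dest: dvd_imp_le)
  ultimately have "[int s = - 1] (mod int p ^ e)"
    using cong_square_1_prime_power[OF assms(1) \<open>odd p\<close>, of "int s" e]
    by (metis cong_int_iff of_nat_1 of_nat_power)
  then have "[(int g ^ t) ^ 2 = - 1] (mod int p ^ e)"
    by (simp add: s_def power_mult[symmetric] mult.commute)
  then show ?thesis ..
qed simp

lemma exists_sqrt_minus_1_mod: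
  fixes n :: nat
  assumes "\<And>p. prime p \<Longrightarrow> p dvd n \<Longrightarrow> [p = 1] (mod 4)"
  shows "\<exists>x. [x ^ 2 = - 1 :: int] (mod int n)"
  using assms
proof (induction n rule: less_induct)
  case (less n)
  consider "n = 0" | "n = 1" | p where "prime p" "p dvd n" "n \<noteq> 0"
    using prime_factor_nat by blast
  then show ?case
  proof cases
    case 1
    then show ?thesis
      using less.prems[of 2] by (simp add: cong_def)
  next
    case 3
    then obtain e m where n: "n = p ^ e * m" and "e > 0" and "\<not> p dvd m"
      by (elim prime_power_factorE)
    have "p ^ e > 1"
      using \<open>e > 0\<close> prime_gt_1_nat[OF \<open>prime p\<close>] by (intro one_less_power)
    then have "m < n"
      using n \<open>n \<noteq> 0\<close> by simp
    then obtain y where y: "[y ^ 2 = - 1 :: int] (mod int m)"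
      using less.IH less.prems n by fastforce
    obtain x where x: "[x ^ 2 = - 1 :: int] (mod int p ^ e)"
      using exists_sqrt_minus_1_mod_prime_power less.prems 3 by blast
    have "coprime (int p ^ e) (int m)"
      using \<open>prime p\<close> \<open>\<not> p dvd m\<close> by (simp add: prime_imp_coprime)
    then obtain z where z: "[z = x] (mod int p ^ e)" "[z = y] (mod int m)"
      using binary_chinese_remainder_int by blast
    have "[z ^ 2 = - 1] (mod int p ^ e)" and "[z ^ 2 = - 1] (mod int m)"
      using cong_trans[OF cong_pow x] cong_trans[OF cong_pow y] z by blast+
    then have "[z ^ 2 = - 1] (mod int p ^ e * int m)"
      using \<open>coprime (int p ^ e) (int m)\<close> by (rule coprime_cong_mult)
    then show ?thesis
      using n by auto
  qed simp
qed

lemma cong_1_if_prime_factors_cong_1: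
  fixes n m :: nat
  assumes "n \<noteq> 0" and "\<And>p. prime p \<Longrightarrow> p dvd n \<Longrightarrow> [p = 1] (mod m)"
  shows "[n = 1] (mod m)"
  using assms
proof (induction n rule: prime_divisors_induct)
  case (factor p n)
  then have "[p * n = 1 * 1] (mod m)"
    by (intro cong_mult) auto
  then show ?case
    by simp
qed simp_all

lemma not_cong_square_minus_1_prime_3_mod_4:
  assumes "prime q" and "[q = 3] (mod 4)"
  shows "\<not> [x ^ 2 = - 1 :: int] (mod int q)"
proof
  assume "[x ^ 2 = - 1] (mod int q)"
  then have "QuadRes (int q) (- 1)"
    unfolding QuadRes_def by blast
  have "q > 2"
    using assms(2) prime_gt_1_nat[OF assms(1)] by (auto simp: cong_def)
  then have "\<not> [- 1 = 0 :: int] (mod int q)"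
    by (auto simp: cong_iff_dvd_diff dest!: zdvd_imp_le)
  then have "Legendre (- 1) (int q) = 1"
    using \<open>QuadRes (int q) (- 1)\<close> by (simp add: Legendre_def)
  moreover have "odd ((q - 1) div 2)"
    using assms(2) unfolding cong_def by presburger
  ultimately have "[1 = - 1 :: int] (mod int q)"
    using euler_criterion[of q "- 1"] assms(1) \<open>q > 2\<close> by simp
  then show False
    using not_cong_1_minus_1 \<open>q > 2\<close> by blast
qed

lemma cong_1_mod_4_iff_not_cong_3:
  fixes p :: nat
  assumes "odd p"
  shows "[p = 1] (mod 4) \<longleftrightarrow> \<not> [p = 3] (mod 4)"
proof -
  have "p mod 4 = 1 \<or> p mod 4 = 3"
    using assms by presburger
  then show ?thesis
    by (auto simp: cong_def)
qed

lemma exists_sqrt_minus_1_mod_iff: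
  fixes n :: nat
  assumes "odd n"
  shows "(\<exists>x. [x ^ 2 = - 1 :: int] (mod int n)) \<longleftrightarrow> (\<forall>p. prime p \<and> p dvd n \<longrightarrow> [p = 1] (mod 4))"
proof
  assume "\<exists>x. [x ^ 2 = - 1 :: int] (mod int n)"
  then obtain x where x: "[x ^ 2 = - 1 :: int] (mod int n)" ..
  show "\<forall>p. prime p \<and> p dvd n \<longrightarrow> [p = 1] (mod 4)"
  proof (intro allI impI, elim conjE)
    fix p :: nat
    assume "prime p" and "p dvd n"
    then have "\<not> [p = 3] (mod 4)"
      using not_cong_square_minus_1_prime_3_mod_4 x cong_dvd_modulus by (meson int_dvd_int_iff)
    moreover have "odd p"
      using \<open>p dvd n\<close> assms by (auto elim: dvdE)
    ultimately show "[p = 1] (mod 4)"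
      using cong_1_mod_4_iff_not_cong_3 by blast
  qed
qed (use exists_sqrt_minus_1_mod in blast)

lemma cong_1_mod_4_if_square_minus_1:
  fixes n :: nat
  assumes "odd n" and "[x ^ 2 = - 1 :: int] (mod int n)"
  shows "[n = 1] (mod 4)"
proof -
  have "n \<noteq> 0"
    using odd_pos[OF assms(1)] by simp
  then show ?thesis
    using cong_1_if_prime_factors_cong_1 exists_sqrt_minus_1_mod_iff[OF assms(1)] assms(2) by blast
qed

section \<open>Strong liars\<close>

lemma cong_pred_iff_cong_minus_1:
  fixes n x :: nat
  assumes "n \<ge> 1"
  shows "[x = n - 1] (mod n) \<longleftrightarrow> [int x = - 1] (mod int n)"
proof -
  have "[x = n - 1] (mod n) \<longleftrightarrow> [int x = int n - 1] (mod int n)"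
    using assms by (simp add: cong_int_iff[symmetric] of_nat_diff)
  also have "\<dots> \<longleftrightarrow> [int x = - 1] (mod int n)"
    using cong_iff_dvd_diff[of "int n - 1" "- 1" "int n"] cong_sym cong_trans
    by (metis diff_minus_eq_add diff_add_cancel dvd_refl)
  finally show ?thesis .
qed

lemma mem_strong_liars_iff:
  assumes "n \<ge> 1"
  shows "a \<in> strong_liars n \<longleftrightarrow> a < n \<and> ([a ^ odd_part_pred n = 1] (mod n) \<or>
    (\<exists>i < two_exp n. [int a ^ (2 ^ i * odd_part_pred n) = - 1] (mod int n)))"
  using cong_pred_iff_cong_minus_1[OF assms] by (simp add: strong_liars_def)

lemma cong_pred_pow_odd_part_pred:
  assumes "n \<ge> 2"
  shows "[int (n - 1) ^ odd_part_pred n = - 1] (mod int n)"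
proof -
  have "[int (n - 1) = - 1] (mod int n)"
    using cong_pred_iff_cong_minus_1[of n "n - 1"] assms by simp
  then show ?thesis
    using cong_pow[of "int (n - 1)" "- 1" "int n" "odd_part_pred n"] odd_part_pred_decomp(2)[OF assms]
    by simp
qed

lemma trivial_strong_liars:
  assumes "odd n" and "n > 1"
  shows "{1, n - 1} \<subseteq> strong_liars n"
proof -
  have "two_exp n > 0"
    using two_exp_geI[of 1 n] assms by simp
  then show ?thesis
    using cong_pred_pow_odd_part_pred[of n] assms(2) by (auto simp: mem_strong_liars_iff)
qed

lemma card_strong_liars_eq_2_iff:
  assumes "odd n" and "n > 1"
  shows "card (strong_liars n) = 2 \<longleftrightarrow> strong_liars n \<subseteq> {1, n - 1}"
proof -
  have "finite (strong_liars n)"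
    by (simp add: strong_liars_def)
  moreover have "n \<noteq> 2"
    using assms(1) by auto
  then have "card {1, n - 1} = 2"
    using assms(2) by simp
  ultimately show ?thesis
    using trivial_strong_liars[OF assms] by (metis card_subset_eq subset_antisym)
qed

lemma strong_liars_subset_trivialI:
  assumes "n > 1" and "coprime (odd_part_pred n) (Carmichael n)"
    and no_sqrt: "\<And>x. \<not> [x ^ 2 = - 1 :: int] (mod int n)"
  shows "strong_liars n \<subseteq> {1, n - 1}"
proof
  define d where "d = odd_part_pred n"
  have "odd d"
    using odd_part_pred_decomp(2) assms(1) by (simp add: d_def)
  have roots: "[x = 1] (mod n)" if "[x ^ d = 1] (mod n)" for x
    using roots_of_unity_trivial_iff_coprime_Carmichael[of n d] odd_pos[OF \<open>odd d\<close>] assms(1,2) that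
    by (simp add: d_def)
  fix a
  assume "a \<in> strong_liars n"
  then consider "a < n" "[a ^ d = 1] (mod n)"
    | i where "a < n" "i < two_exp n" "[int a ^ (2 ^ i * d) = - 1] (mod int n)"
    using mem_strong_liars_iff assms(1) by (auto simp: d_def)
  then show "a \<in> {1, n - 1}"
  proof cases
    case 1
    then show ?thesis
      using roots[of a] by (simp add: cong_def)
  next
    case (2 i)
    show ?thesis
    proof (cases i)
      case 0
      have "[int (n - a) = - int a] (mod int n)"
        using \<open>a < n\<close> by (simp add: cong_iff_dvd_diff of_nat_diff)
      then have "[int (n - a) ^ d = (- int a) ^ d] (mod int n)"
        by (rule cong_pow)
      moreover have "[(- int a) ^ d = 1] (mod int n)"
        using 2(3) 0 \<open>odd d\<close> cong_minus_minus_iff by fastforce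
      ultimately have "[int ((n - a) ^ d) = int 1] (mod int n)"
        using cong_trans by simp
      then have "[n - a = 1] (mod n)"
        using roots cong_int_iff by blast
      then show ?thesis
        using \<open>a < n\<close> assms(1) by (cases "a = 0") (auto simp: cong_def)
    next
      case (Suc j)
      then show ?thesis
        using 2(3) no_sqrt[of "int a ^ (2 ^ j * d)"] by (simp add: power_mult[symmetric] ac_simps)
    qed
  qed
qed

lemma coprime_Carmichael_if_strong_liars_subset_trivial:
  assumes "odd n" and "n > 1" and liars: "strong_liars n \<subseteq> {1, n - 1}"
  shows "coprime (odd_part_pred n) (Carmichael n)"
proof -
  define d where "d = odd_part_pred n"
  have "[x = 1] (mod n)" if "[x ^ d = 1] (mod n)" for x
  proof -
    have "[(x mod n) ^ d = 1] (mod n)"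
      using that by (simp add: cong_def power_mod)
    then have "x mod n \<in> strong_liars n"
      using mem_strong_liars_iff assms(2) by (simp add: d_def)
    then have "x mod n \<in> {1, n - 1}"
      using liars by blast
    moreover have "x mod n \<noteq> n - 1"
    proof
      assume "x mod n = n - 1"
      then have "[int (n - 1) ^ d = 1] (mod int n)"
        using \<open>[(x mod n) ^ d = 1] (mod n)\<close> cong_int_iff by force
      moreover have "n > 2"
        using assms(1,2) by presburger
      ultimately show False
        using cong_pred_pow_odd_part_pred[of n] not_cong_1_minus_1 unfolding d_def
        by (metis cong_sym cong_trans less_imp_le)
    qed
    ultimately show ?thesis
      using assms(2) by (simp add: cong_def)
  qed
  moreover have "d > 0"
    using odd_pos odd_part_pred_decomp(2) assms(2) by (simp add: d_def)
  ultimately show ?thesis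
    using roots_of_unity_trivial_iff_coprime_Carmichael assms(2) unfolding d_def by blast
qed

lemma no_sqrt_minus_1_if_strong_liars_subset_trivial:
  assumes "odd n" and "n > 1" and liars: "strong_liars n \<subseteq> {1, n - 1}"
  shows "\<not> [x ^ 2 = - 1 :: int] (mod int n)"
proof
  assume x: "[x ^ 2 = - 1] (mod int n)"
  define a where "a = nat (x mod int n)"
  have "[int a = x] (mod int n)"
    using assms(2) by (simp add: a_def cong_def)
  then have a_square: "[int a ^ 2 = - 1] (mod int n)"
    using x by (metis cong_pow cong_trans)
  then have "[int a ^ (2 ^ 1 * odd_part_pred n) = - 1] (mod int n)"
    using cong_pow[OF a_square, of "odd_part_pred n"] odd_part_pred_decomp(2) assms(2)
    by (simp add: power_mult)
  moreover have "1 < two_exp n"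
    using two_exp_geI[of 2 n] cong_to_1_nat[OF cong_1_mod_4_if_square_minus_1[OF assms(1) x]] assms(2)
    by simp
  moreover have "a < n"
    using assms(2) by (simp add: a_def nat_less_iff)
  ultimately have "a \<in> strong_liars n"
    using mem_strong_liars_iff[of n a] assms(2) by auto
  then have "a \<in> {1, n - 1}"
    using liars by blast
  then have "[int a = 1] (mod int n) \<or> [int a = - 1] (mod int n)"
    using cong_pred_iff_cong_minus_1[of n a] assms(2) by auto
  then have "[int a ^ 2 = 1] (mod int n)"
    using cong_pow[of "int a" 1 "int n" 2] cong_pow[of "int a" "- 1" "int n" 2] by auto
  moreover have "n > 2"
    using assms(1,2) by presburger
  ultimately show False
    using a_square not_cong_1_minus_1 by (metis cong_sym cong_trans)
qed

theorem proposition2p4: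
  fixes n :: nat
  assumes "odd n" and "n > 1" and "\<not> prime n"
  shows "card (strong_liars n) = 2 \<longleftrightarrow>
    ((\<exists>p. prime p \<and> p dvd n \<and> [p = 3] (mod 4)) \<and>
     (\<forall>p. prime p \<and> p dvd n \<longrightarrow> gcd (odd_part_pred p) (odd_part_pred (n div p)) = 1))"
proof -
  define d where "d = odd_part_pred n"
  have "card (strong_liars n) = 2 \<longleftrightarrow>
      coprime d (Carmichael n) \<and> (\<forall>x. \<not> [x ^ 2 = - 1 :: int] (mod int n))"
    using card_strong_liars_eq_2_iff strong_liars_subset_trivialI
      coprime_Carmichael_if_strong_liars_subset_trivial no_sqrt_minus_1_if_strong_liars_subset_trivial
      assms(1,2) unfolding d_def by blast
  moreover have "coprime d (Carmichael n) \<longleftrightarrow> (\<forall>p. prime p \<and> p dvd n \<longrightarrow> coprime (p - 1) d)"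
    using coprime_Carmichael_iff coprime_odd_part_pred assms(2) unfolding d_def by simp
  moreover have "coprime (p - 1) d \<longleftrightarrow> gcd (odd_part_pred p) (odd_part_pred (n div p)) = 1"
    if "prime p" and "p dvd n" for p
  proof -
    have "p < n"
      using that assms(2,3) dvd_imp_le[of p n] by (cases "p = n") auto
    then show ?thesis
      using gcd_odd_part_pred_div[of p n] prime_ge_2_nat[OF \<open>prime p\<close>] \<open>p dvd n\<close>
      unfolding coprime_iff_gcd_eq_1 d_def by simp
  qed
  moreover have "(\<forall>x. \<not> [x ^ 2 = - 1 :: int] (mod int n)) \<longleftrightarrow>
      (\<exists>p. prime p \<and> p dvd n \<and> [p = 3] (mod 4))"
    using exists_sqrt_minus_1_mod_iff[OF assms(1)] cong_1_mod_4_iff_not_cong_3 assms(1) dvd_trans[of 2]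
    by blast
  ultimately show ?thesis
    by blast
qed

end
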